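(* Let $\mathcal X$ and $\mathcal Y$ be nonempty compact $\beta$-strongly convex sets (with respect to norms $\|\cdot\|_{\mathcal X}$, $\|\cdot\|_{\mathcal Y}$), and let $\mathcal L:\mathcal X\times\mathcal Y\to\mathbb R$ be a differentiable convex-concave function such that $F(z):=(\nabla_x\mathcal L(z),-\nabla_y\mathcal L(z))$ satisfies $\max(\|\nabla_x\mathcal L(z)-\nabla_x\mathcal L(z')\|_{\mathcal X^*},\|\nabla_y\mathcal L(z)-\nabla_y\mathcal L(z')\|_{\mathcal Y^*})\le L\|z-z'\|_{\mathcal X\times\mathcal Y}$ for all $z,z'$. If $\min(\|\nabla_x\mathcal L(z)\|_{\mathcal X^*},\|\nabla_y\mathcal L(z)\|_{\mathcal Y^*})\ge\delta>0$ for all $z\in\mathcal X\times\mathcal Y$, then the oracle function $z\mapsto s(z):=\arg\min_{s\in\mathcal X\times\mathcal Y}\langle s,F(z)\rangle$ is well defined (the minimizer is unique) and is $\frac{4L}{\delta\beta}$-Lipschitz continuous with respect to the norm $\|(x,y)\|_{\mathcal X\times\mathcal Y}:=\|x\|_{\mathcal X}+\|y\|_{\mathcal Y}$.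
   Context: $\mathcal L$ is convex-concave if $\mathcal L(\cdot,y)$ is convex for every $y$ and $\mathcal L(x,\cdot)$ is concave for every $x$. $\|\cdot\|_{\mathcal X^*}$ denotes the dual norm of $\|\cdot\|_{\mathcal X}$ (similarly for $\mathcal Y$). A convex set $\mathcal X$ is $\beta$-strongly convex with respect to $\|\cdot\|$ if for any $x,y\in\mathcal X$ and $\gamma\in[0,1]$, the $\|\cdot\|$-ball of radius $\gamma(1-\gamma)\frac\beta2\|x-y\|^2$ centered at $\gamma x+(1-\gamma)y$ is contained in $\mathcal X$. *)

theory Defs
  imports "HOL-Analysis.Analysis"
begin

definition is_norm :: "('a::real_vector \<Rightarrow> real) \<Rightarrow> bool" where
  "is_norm N \<longleftrightarrow> (\<forall>x. 0 \<le> N x) \<and> (\<forall>x. N x = 0 \<longleftrightarrow> x = 0)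
     \<and> (\<forall>c x. N (c *\<^sub>R x) = \<bar>c\<bar> * N x) \<and> (\<forall>x y. N (x + y) \<le> N x + N y)"

definition dual_norm :: "('a::real_inner \<Rightarrow> real) \<Rightarrow> 'a \<Rightarrow> real" where
  "dual_norm N g = Sup {g \<bullet> u | u. N u \<le> 1}"

definition strongly_convex_set :: "real \<Rightarrow> ('a::real_vector \<Rightarrow> real) \<Rightarrow> 'a set \<Rightarrow> bool" where
  "strongly_convex_set \<beta> N S \<longleftrightarrow> convex S \<and>
     (\<forall>x\<in>S. \<forall>y\<in>S. \<forall>\<gamma>\<in>{0..1}.
        {w. N (w - (\<gamma> *\<^sub>R x + (1 - \<gamma>) *\<^sub>R y)) \<le> \<gamma> * (1 - \<gamma>) * (\<beta> / 2) * (N (x - y))\<^sup>2} \<subseteq> S)"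

text \<open>The linear-minimization oracle: the (unique, when it exists) minimizer of
  the linear function s \<mapsto> s \<bullet> g over S.\<close>
definition is_lmo :: "'a::real_inner set \<Rightarrow> 'a \<Rightarrow> 'a \<Rightarrow> bool" where
  "is_lmo S g s \<longleftrightarrow> s \<in> S \<and> (\<forall>t\<in>S. s \<bullet> g \<le> t \<bullet> g)"

definition lmo :: "'a::real_inner set \<Rightarrow> 'a \<Rightarrow> 'a" where
  "lmo S g = (THE s. is_lmo S g s)"

end

theory Submission imports Defs begin

text \<open>
  If \<open>s\<^sub>1, s\<^sub>2\<close> minimise \<open>\<langle>\<cdot>, g\<^sub>1\<rangle>\<close>, \<open>\<langle>\<cdot>, g\<^sub>2\<rangle>\<close> over a \<open>\<beta>\<close>-strongly convex set \<open>S\<close>,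
  then \<open>S\<close> contains the ball of radius \<open>r = \<beta>/8 \<cdot> \<parallel>s\<^sub>1 - s\<^sub>2\<parallel>\<^sup>2\<close> around their midpoint \<open>m\<close>.
  Minimality of \<open>s\<^sub>i\<close> against that ball gives \<open>r \<parallel>g\<^sub>i\<parallel>\<^sub>* \<le> \<langle>m - s\<^sub>i, g\<^sub>i\<rangle>\<close>; adding both
  inequalities yields \<open>\<beta>\<delta>/4 \<cdot> \<parallel>s\<^sub>1 - s\<^sub>2\<parallel>\<^sup>2 \<le> 1/2 \<cdot> \<parallel>g\<^sub>1 - g\<^sub>2\<parallel>\<^sub>* \<parallel>s\<^sub>1 - s\<^sub>2\<parallel>\<close>,
  i.e. the oracle is \<open>2/(\<beta>\<delta>)\<close>-Lipschitz in the gradient (and unique, taking \<open>g\<^sub>1 = g\<^sub>2\<close>).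
  The oracle over \<open>X \<times> Y\<close> splits into the oracles over \<open>X\<close> and \<open>Y\<close>, and the
  Lipschitz bound on \<open>F\<close> turns the two estimates into the claimed \<open>4L/(\<delta>\<beta>)\<close>.
\<close>

context
  fixes N :: "'a::real_vector \<Rightarrow> real"
  assumes N: "is_norm N"
begin

lemma is_norm_nonneg: "0 \<le> N x"
  and is_norm_eq_zero: "N x = 0 \<longleftrightarrow> x = 0"
  and is_norm_scaleR: "N (c *\<^sub>R x) = \<bar>c\<bar> * N x"
  and is_norm_triangle: "N (x + y) \<le> N x + N y"
  using N unfolding is_norm_def by blast+

lemma is_norm_zero: "N 0 = 0"
  by (simp add: is_norm_eq_zero)

lemma is_norm_pos: "x \<noteq> 0 \<Longrightarrow> 0 < N x"
  using is_norm_nonneg is_norm_eq_zero by (metis less_eq_real_def)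

lemma is_norm_minus: "N (- x) = N x"
  using is_norm_scaleR[of "-1" x] by simp

lemma is_norm_minus_commute: "N (x - y) = N (y - x)"
  using is_norm_minus[of "x - y"] by simp

lemma is_norm_reverse_triangle: "\<bar>N x - N y\<bar> \<le> N (x - y)"
  using is_norm_triangle[of y "x - y"] is_norm_triangle[of x "y - x"] is_norm_minus_commute[of x y]
  by simp

lemma is_norm_sum_le: "N (sum f A) \<le> (\<Sum>a\<in>A. N (f a))"
proof (induction A rule: infinite_finite_induct)
  case (insert a A)
  then show ?case using is_norm_triangle[of "f a" "sum f A"] by simp
qed (simp_all add: is_norm_zero)

end

context
  fixes N :: "'a::euclidean_space \<Rightarrow> real"
  assumes N: "is_norm N"
begin

lemma is_norm_le_norm: "\<exists>K\<ge>0. \<forall>x. N x \<le> K * norm x"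
proof (intro exI conjI allI)
  show "0 \<le> (\<Sum>b\<in>Basis. N b)" by (simp add: sum_nonneg is_norm_nonneg[OF N])
  fix x :: 'a
  have "N x = N (\<Sum>b\<in>Basis. (x \<bullet> b) *\<^sub>R b)" by (simp add: euclidean_representation)
  also have "\<dots> \<le> (\<Sum>b\<in>Basis. N ((x \<bullet> b) *\<^sub>R b))" by (rule is_norm_sum_le[OF N])
  also have "\<dots> = (\<Sum>b\<in>Basis. \<bar>x \<bullet> b\<bar> * N b)" by (simp add: is_norm_scaleR[OF N])
  also have "\<dots> \<le> (\<Sum>b\<in>Basis. norm x * N b)"
    by (intro sum_mono mult_right_mono) (auto simp: Basis_le_norm is_norm_nonneg[OF N])
  finally show "N x \<le> (\<Sum>b\<in>Basis. N b) * norm x" by (simp add: sum_distrib_left mult.commute)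
qed

lemma continuous_on_is_norm: "continuous_on S N"
proof -
  obtain K where K: "K \<ge> 0" "\<And>x. N x \<le> K * norm x" using is_norm_le_norm by blast
  have "K-lipschitz_on S N"
  proof (rule lipschitz_onI)
    fix x y
    have "\<bar>N x - N y\<bar> \<le> K * norm (x - y)" using is_norm_reverse_triangle[OF N] K(2) order_trans by blast
    then show "dist (N x) (N y) \<le> K * dist x y" by (simp add: dist_real_def dist_norm)
  qed (rule K(1))
  then show ?thesis by (rule lipschitz_on_continuous_on)
qed

lemma norm_le_is_norm: "\<exists>m>0. \<forall>x. m * norm x \<le> N x"
proof -
  obtain b :: 'a where "b \<in> Basis" using nonempty_Basis by blast
  then have ne: "sphere (0::'a) 1 \<noteq> {}" by (auto simp: norm_Basis intro!: exI[of _ b])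
  obtain x0 where x0: "x0 \<in> sphere (0::'a) 1" "\<And>y. y \<in> sphere 0 1 \<Longrightarrow> N x0 \<le> N y"
    using continuous_attains_inf[OF compact_sphere ne continuous_on_is_norm] by blast
  have "N x0 * norm x \<le> N x" for x
  proof (cases "x = 0")
    case False
    have "N x0 \<le> N ((1 / norm x) *\<^sub>R x)" using x0(2) False by simp
    then show ?thesis using False by (simp add: is_norm_scaleR[OF N] field_simps)
  qed (simp add: is_norm_zero[OF N])
  moreover have "N x0 > 0" using x0(1) by (intro is_norm_pos[OF N]) auto
  ultimately show ?thesis by blast
qed

lemma dual_norm_set_nonempty: "{g \<bullet> u | u. N u \<le> 1} \<noteq> {}"
  by (auto simp: is_norm_zero[OF N] intro!: exI[of _ 0])

lemma bdd_above_dual_norm_set: "bdd_above {g \<bullet> u | u. N u \<le> 1}"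
proof -
  obtain m where m: "m > 0" "\<And>x. m * norm x \<le> N x" using norm_le_is_norm by blast
  show ?thesis
  proof (rule bdd_aboveI)
    fix t assume "t \<in> {g \<bullet> u | u. N u \<le> 1}"
    then obtain u where u: "t = g \<bullet> u" "N u \<le> 1" by blast
    have "norm u \<le> 1 / m" using m(2)[of u] u(2) m(1) by (simp add: field_simps)
    then have "norm g * norm u \<le> norm g * (1 / m)" by (rule mult_left_mono) simp
    then show "t \<le> norm g * (1 / m)" using u(1) norm_cauchy_schwarz order_trans by blast
  qed
qed

lemma inner_le_dual_norm: "N u \<le> 1 \<Longrightarrow> g \<bullet> u \<le> dual_norm N g"
  unfolding dual_norm_def by (rule cSup_upper) (auto intro: bdd_above_dual_norm_set)

lemma dual_norm_nonneg: "0 \<le> dual_norm N g"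
  using inner_le_dual_norm[of 0] by (simp add: is_norm_zero[OF N])

lemma inner_le_dual_norm_mult: "g \<bullet> v \<le> dual_norm N g * N v"
proof (cases "v = 0")
  case False
  then have p: "N v > 0" by (rule is_norm_pos[OF N])
  have "g \<bullet> ((1 / N v) *\<^sub>R v) \<le> dual_norm N g"
    using p by (intro inner_le_dual_norm) (simp add: is_norm_scaleR[OF N])
  then show ?thesis using p by (simp add: field_simps)
qed (simp add: is_norm_zero[OF N])

lemma dual_norm_le: "(\<And>u. N u \<le> 1 \<Longrightarrow> g \<bullet> u \<le> c) \<Longrightarrow> dual_norm N g \<le> c"
  unfolding dual_norm_def by (rule cSup_least[OF dual_norm_set_nonempty]) blast

lemma dual_norm_zero: "dual_norm N 0 = 0"
  using dual_norm_le[of 0 0] dual_norm_nonneg[of 0] by simp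

lemma dual_norm_minus: "dual_norm N (- g) = dual_norm N g"
proof -
  have "(- g) \<bullet> u = g \<bullet> (- u)" "N (- u) = N u" for g u
    by (simp_all add: is_norm_minus[OF N])
  then have "dual_norm N (- g) \<le> dual_norm N g" for g
    by (metis dual_norm_le inner_le_dual_norm)
  from this[of g] this[of "- g"] show ?thesis by simp
qed

end

lemma strongly_convex_set_midpoint_ball:
  assumes "strongly_convex_set \<beta> N S" "x \<in> S" "y \<in> S"
  shows "{w. N (w - midpoint x y) \<le> \<beta> / 8 * (N (x - y))\<^sup>2} \<subseteq> S"
proof -
  have "(1/2::real) \<in> {0..1}" by simp
  with assms have "{w. N (w - ((1/2) *\<^sub>R x + (1 - 1/2) *\<^sub>R y)) \<le> 1/2 * (1 - 1/2) * (\<beta> / 2) * (N (x - y))\<^sup>2} \<subseteq> S"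
    unfolding strongly_convex_set_def by blast
  then show ?thesis by (simp add: midpoint_def scaleR_add_right)
qed

lemma is_lmo_ball_gap:
  fixes N :: "'a::euclidean_space \<Rightarrow> real"
  assumes N: "is_norm N" and r: "0 \<le> r" and ball: "{w. N (w - m) \<le> r} \<subseteq> S"
    and s: "is_lmo S g s"
  shows "r * dual_norm N g \<le> (m - s) \<bullet> g"
proof -
  have gap: "r * (g \<bullet> u) \<le> (m - s) \<bullet> g" if "N u \<le> 1" for u
  proof -
    have "N ((m - r *\<^sub>R u) - m) \<le> r"
      using that r by (simp add: is_norm_minus[OF N] is_norm_scaleR[OF N] mult_left_le)
    then have "s \<bullet> g \<le> (m - r *\<^sub>R u) \<bullet> g" using s ball unfolding is_lmo_def by blast
    then show ?thesis by (simp add: inner_diff_left inner_commute algebra_simps)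
  qed
  show ?thesis
  proof (cases "r = 0")
    case True
    then show ?thesis using gap[of 0] by (simp add: is_norm_zero[OF N])
  next
    case False
    then have "dual_norm N g \<le> (m - s) \<bullet> g / r"
      using r gap by (intro dual_norm_le[OF N]) (simp add: le_divide_eq mult.commute)
    then show ?thesis using False r by (simp add: le_divide_eq mult.commute)
  qed
qed

lemma strongly_convex_is_lmo_lipschitz:
  fixes N :: "'a::euclidean_space \<Rightarrow> real"
  assumes N: "is_norm N" and S: "strongly_convex_set \<beta> N S" and "\<beta> > 0" "\<delta> > 0"
    and g1: "dual_norm N g1 \<ge> \<delta>" and g2: "dual_norm N g2 \<ge> \<delta>"
    and s1: "is_lmo S g1 s1" and s2: "is_lmo S g2 s2"
  shows "N (s1 - s2) \<le> 2 / (\<beta> * \<delta>) * dual_norm N (g1 - g2)"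
proof -
  define d where "d = N (s1 - s2)"
  define r where "r = \<beta> / 8 * d\<^sup>2"
  have r0: "0 \<le> r" using \<open>\<beta> > 0\<close> by (simp add: r_def)
  have ball: "{w. N (w - midpoint s1 s2) \<le> r} \<subseteq> S"
    using strongly_convex_set_midpoint_ball[OF S] s1 s2 by (simp add: r_def d_def is_lmo_def)
  have "r * \<delta> \<le> (midpoint s1 s2 - s1) \<bullet> g1"
    using is_lmo_ball_gap[OF N r0 ball s1] g1 r0 by (meson mult_left_mono order_trans)
  moreover have "r * \<delta> \<le> (midpoint s1 s2 - s2) \<bullet> g2"
    using is_lmo_ball_gap[OF N r0 ball s2] g2 r0 by (meson mult_left_mono order_trans)
  ultimately have "4 * r * \<delta> \<le> (s2 - s1) \<bullet> (g1 - g2)"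
    by (simp add: midpoint_def inner_diff_left inner_diff_right inner_add_left algebra_simps)
  also have "\<dots> \<le> dual_norm N (g1 - g2) * d"
    using inner_le_dual_norm_mult[OF N, of "g1 - g2" "s2 - s1"]
    by (simp add: d_def inner_commute is_norm_minus_commute[OF N])
  finally have "\<beta> * \<delta> * d * d \<le> 2 * dual_norm N (g1 - g2) * d"
    by (simp add: r_def power2_eq_square algebra_simps)
  moreover have "d \<ge> 0" by (simp add: d_def is_norm_nonneg[OF N])
  ultimately have "\<beta> * \<delta> * d \<le> 2 * dual_norm N (g1 - g2)"
    using dual_norm_nonneg[OF N, of "g1 - g2"] \<open>\<beta> > 0\<close> \<open>\<delta> > 0\<close>
    by (cases "d = 0") simp_all
  then show ?thesis using \<open>\<beta> > 0\<close> \<open>\<delta> > 0\<close> by (simp add: d_def field_simps)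
qed

lemma strongly_convex_is_lmo_unique:
  fixes N :: "'a::euclidean_space \<Rightarrow> real"
  assumes N: "is_norm N" and "strongly_convex_set \<beta> N S" "\<beta> > 0" "\<delta> > 0"
    and "dual_norm N g \<ge> \<delta>" "is_lmo S g s1" "is_lmo S g s2"
  shows "s1 = s2"
  using strongly_convex_is_lmo_lipschitz[OF assms(1-5,5-7)]
  by (simp add: dual_norm_zero[OF N]) (metis is_norm_nonneg[OF N] is_norm_eq_zero[OF N] order_antisym right_minus_eq)

lemma is_lmo_exists:
  fixes S :: "'a::euclidean_space set"
  assumes "compact S" "S \<noteq> {}"
  shows "\<exists>s. is_lmo S g s"
proof -
  have "continuous_on S (\<lambda>s. s \<bullet> g)" by (intro continuous_intros)
  from continuous_attains_inf[OF assms this] show ?thesis unfolding is_lmo_def by blast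
qed

lemma is_lmo_Times:
  assumes "X \<noteq> {}" "Y \<noteq> {}"
  shows "is_lmo (X \<times> Y) (a, b) s \<longleftrightarrow> is_lmo X a (fst s) \<and> is_lmo Y b (snd s)"
proof
  assume h: "is_lmo (X \<times> Y) (a, b) s"
  then have le: "fst s \<bullet> a + snd s \<bullet> b \<le> x \<bullet> a + y \<bullet> b" if "x \<in> X" "y \<in> Y" for x y
    using that unfolding is_lmo_def by (cases s) force
  have "fst s \<in> X" "snd s \<in> Y" using h unfolding is_lmo_def by auto
  with le[of _ "snd s"] le[of "fst s"] show "is_lmo X a (fst s) \<and> is_lmo Y b (snd s)"
    unfolding is_lmo_def by auto
next
  assume "is_lmo X a (fst s) \<and> is_lmo Y b (snd s)"
  then show "is_lmo (X \<times> Y) (a, b) s" unfolding is_lmo_def by (cases s) (auto simp: add_mono)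
qed

context
  fixes X :: "'a::euclidean_space set" and Y :: "'b::euclidean_space set"
    and nX :: "'a \<Rightarrow> real" and nY :: "'b \<Rightarrow> real" and \<beta> \<delta> :: real
  assumes nX: "is_norm nX" and nY: "is_norm nY" and "compact X" "compact Y" "X \<noteq> {}" "Y \<noteq> {}"
    and \<beta>: "\<beta> > 0" and \<delta>: "\<delta> > 0"
    and X: "strongly_convex_set \<beta> nX X" and Y: "strongly_convex_set \<beta> nY Y"
begin

lemma strongly_convex_Times_lmo:
  assumes "dual_norm nX a \<ge> \<delta>" "dual_norm nY b \<ge> \<delta>"
  shows "\<exists>!s. is_lmo (X \<times> Y) (a, b) s"
    and "is_lmo X a (fst (lmo (X \<times> Y) (a, b)))" "is_lmo Y b (snd (lmo (X \<times> Y) (a, b)))"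
proof -
  obtain s1 s2 where "is_lmo X a s1" "is_lmo Y b s2"
    using is_lmo_exists \<open>compact X\<close> \<open>compact Y\<close> \<open>X \<noteq> {}\<close> \<open>Y \<noteq> {}\<close> by metis
  then show uniq: "\<exists>!s. is_lmo (X \<times> Y) (a, b) s"
    using strongly_convex_is_lmo_unique[OF nX X \<beta> \<delta>] strongly_convex_is_lmo_unique[OF nY Y \<beta> \<delta>] assms
    unfolding is_lmo_Times[OF \<open>X \<noteq> {}\<close> \<open>Y \<noteq> {}\<close>]
    by (metis fst_conv snd_conv prod_eqI)
  have "is_lmo (X \<times> Y) (a, b) (lmo (X \<times> Y) (a, b))" unfolding lmo_def by (rule theI'[OF uniq])
  then show "is_lmo X a (fst (lmo (X \<times> Y) (a, b)))" "is_lmo Y b (snd (lmo (X \<times> Y) (a, b)))"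
    by (simp_all add: is_lmo_Times[OF \<open>X \<noteq> {}\<close> \<open>Y \<noteq> {}\<close>])
qed

lemma strongly_convex_Times_lmo_lipschitz:
  assumes "dual_norm nX a \<ge> \<delta>" "dual_norm nY b \<ge> \<delta>" "dual_norm nX a' \<ge> \<delta>" "dual_norm nY b' \<ge> \<delta>"
  defines "s \<equiv> lmo (X \<times> Y) (a, b)" and "s' \<equiv> lmo (X \<times> Y) (a', b')"
  shows "nX (fst s - fst s') + nY (snd s - snd s')
    \<le> 2 / (\<beta> * \<delta>) * (dual_norm nX (a - a') + dual_norm nY (b - b'))"
proof -
  have "nX (fst s - fst s') \<le> 2 / (\<beta> * \<delta>) * dual_norm nX (a - a')"
    unfolding s_def s'_def using assms(1-4)
    by (intro strongly_convex_is_lmo_lipschitz[OF nX X \<beta> \<delta>] strongly_convex_Times_lmo)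
  moreover have "nY (snd s - snd s') \<le> 2 / (\<beta> * \<delta>) * dual_norm nY (b - b')"
    unfolding s_def s'_def using assms(1-4)
    by (intro strongly_convex_is_lmo_lipschitz[OF nY Y \<beta> \<delta>] strongly_convex_Times_lmo)
  ultimately show ?thesis by (simp add: distrib_left)
qed

end

theorem theorem3:
  fixes X :: "'a::euclidean_space set" and Y :: "'b::euclidean_space set"
    and nX :: "'a \<Rightarrow> real" and nY :: "'b \<Rightarrow> real"
    and \<L> :: "'a \<times> 'b \<Rightarrow> real"
    and gx :: "'a \<times> 'b \<Rightarrow> 'a" and gy :: "'a \<times> 'b \<Rightarrow> 'b"
    and \<beta> Lc \<delta> :: real
  assumes normX: "is_norm nX" and normY: "is_norm nY"
    and neX: "X \<noteq> {}" and neY: "Y \<noteq> {}"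
    and cX: "compact X" and cY: "compact Y"
    and beta_pos: "\<beta> > 0"
    and scX: "strongly_convex_set \<beta> nX X" and scY: "strongly_convex_set \<beta> nY Y"
    and diff: "\<And>z. z \<in> X \<times> Y \<Longrightarrow>
        (\<L> has_derivative (\<lambda>(h, k). gx z \<bullet> h + gy z \<bullet> k)) (at z)"
    and cvx: "\<And>y. y \<in> Y \<Longrightarrow> convex_on X (\<lambda>x. \<L> (x, y))"
    and ccv: "\<And>x. x \<in> X \<Longrightarrow> concave_on Y (\<lambda>y. \<L> (x, y))"
    and lip: "\<And>x y x' y'. x \<in> X \<Longrightarrow> y \<in> Y \<Longrightarrow> x' \<in> X \<Longrightarrow> y' \<in> Y \<Longrightarrow>
        max (dual_norm nX (gx (x, y) - gx (x', y'))) (dual_norm nY (gy (x, y) - gy (x', y')))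
          \<le> Lc * (nX (x - x') + nY (y - y'))"
    and delta_pos: "\<delta> > 0"
    and grad_lb: "\<And>z. z \<in> X \<times> Y \<Longrightarrow> min (dual_norm nX (gx z)) (dual_norm nY (gy z)) \<ge> \<delta>"
  shows "(\<forall>z\<in>X \<times> Y. \<exists>!s. is_lmo (X \<times> Y) (gx z, - gy z) s)
    \<and> (\<forall>x\<in>X. \<forall>y\<in>Y. \<forall>x'\<in>X. \<forall>y'\<in>Y.
         (let s = lmo (X \<times> Y) (gx (x, y), - gy (x, y));
              s' = lmo (X \<times> Y) (gx (x', y'), - gy (x', y'))
          in nX (fst s - fst s') + nY (snd s - snd s')
             \<le> (4 * Lc / (\<delta> * \<beta>)) * (nX (x - x') + nY (y - y'))))"
proof -
  note lmo_facts = strongly_convex_Times_lmo[OF normX normY cX cY neX neY beta_pos delta_pos scX scY]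
    and lmo_lipschitz = strongly_convex_Times_lmo_lipschitz[OF normX normY cX cY neX neY beta_pos delta_pos scX scY]
  have grad: "dual_norm nX (gx z) \<ge> \<delta>" "dual_norm nY (- gy z) \<ge> \<delta>" if "z \<in> X \<times> Y" for z
    using grad_lb[OF that] by (simp_all add: dual_norm_minus[OF normY])
  have "nX (fst s - fst s') + nY (snd s - snd s') \<le> 4 * Lc / (\<delta> * \<beta>) * D"
    if xy: "x \<in> X" "y \<in> Y" "x' \<in> X" "y' \<in> Y" and D: "D = nX (x - x') + nY (y - y')"
      and "s = lmo (X \<times> Y) (gx (x, y), - gy (x, y))" "s' = lmo (X \<times> Y) (gx (x', y'), - gy (x', y'))"
    for x y x' y' D s s'
  proof -
    have "dual_norm nX (gx (x, y) - gx (x', y')) + dual_norm nY (- gy (x, y) - - gy (x', y')) \<le> 2 * Lc * D"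
      using lip[OF xy] dual_norm_minus[OF normY, of "gy (x, y) - gy (x', y')"] by (simp add: D)
    moreover have "0 \<le> 2 / (\<beta> * \<delta>)" using beta_pos delta_pos by simp
    ultimately have "2 / (\<beta> * \<delta>) * (dual_norm nX (gx (x, y) - gx (x', y'))
        + dual_norm nY (- gy (x, y) - - gy (x', y'))) \<le> 2 / (\<beta> * \<delta>) * (2 * Lc * D)"
      by (rule mult_left_mono)
    also have "\<dots> = 4 * Lc / (\<delta> * \<beta>) * D" by (simp add: mult.commute)
    finally show ?thesis
      using lmo_lipschitz[OF grad[of "(x, y)"] grad[of "(x', y')"]] xy that(6,7) by simp
  qed
  then show ?thesis using lmo_facts(1) grad by (auto simp: Let_def)
qed

end
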